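(* For any graph $G$ of order $n$ and maximum degree $\Delta=\Delta(G)\ge 2$, $$\left\lceil \frac{2n}{\Delta}\right\rceil\le \gamma_{qtR}(G)\le n-\Delta(G)+2.$$
   Context: All graphs are finite, simple and undirected. For $f:V(G)\to\{0,1,2\}$ write $V_i=\{v:f(v)=i\}$; weight $\omega(f)=|V_1|+2|V_2|$. A quasi-total Roman dominating function (QTRDF) is an $f$ such that every vertex labeled $0$ is adjacent to a vertex labeled $2$, and every vertex isolated in the subgraph induced by $V_1\cup V_2$ has label $1$; $\gamma_{qtR}(G)$ is the minimum weight of a QTRDF. *)

theory Defs
  imports Complex_Main
begin

definition graph :: "'a set \<Rightarrow> ('a \<Rightarrow> 'a \<Rightarrow> bool) \<Rightarrow> bool" where
  "graph V E \<longleftrightarrow> finite V \<and> (\<forall>u v. E u v \<longrightarrow> u \<in> V \<and> v \<in> V)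
     \<and> (\<forall>u v. E u v \<longrightarrow> E v u) \<and> (\<forall>v. \<not> E v v)"

definition degree :: "'a set \<Rightarrow> ('a \<Rightarrow> 'a \<Rightarrow> bool) \<Rightarrow> 'a \<Rightarrow> nat" where
  "degree V E v = card {u \<in> V. E v u}"

definition max_degree :: "'a set \<Rightarrow> ('a \<Rightarrow> 'a \<Rightarrow> bool) \<Rightarrow> nat" where
  "max_degree V E = Max (insert 0 (degree V E ` V))"

text \<open>Quasi-total Roman dominating function: values in {0,1,2} on V; every vertex
labelled 0 has a neighbour labelled 2; every vertex isolated in the subgraph induced
by V1 \<union> V2 (i.e. with positive label and no neighbour of positive label) has label 1.\<close>
definition is_qtrdf :: "'a set \<Rightarrow> ('a \<Rightarrow> 'a \<Rightarrow> bool) \<Rightarrow> ('a \<Rightarrow> nat) \<Rightarrow> bool" where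
  "is_qtrdf V E f \<longleftrightarrow>
     (\<forall>v\<in>V. f v \<in> {0,1,2})
     \<and> (\<forall>v\<in>V. f v = 0 \<longrightarrow> (\<exists>u\<in>V. E v u \<and> f u = 2))
     \<and> (\<forall>v\<in>V. f v \<noteq> 0 \<and> (\<forall>u\<in>V. E v u \<longrightarrow> f u = 0) \<longrightarrow> f v = 1)"

definition weight :: "'a set \<Rightarrow> ('a \<Rightarrow> nat) \<Rightarrow> nat" where
  "weight V f = (\<Sum>v\<in>V. f v)"

definition gamma_qtR :: "'a set \<Rightarrow> ('a \<Rightarrow> 'a \<Rightarrow> bool) \<Rightarrow> nat" where
  "gamma_qtR V E = Min {weight V f | f. is_qtrdf V E f}"

end

theory Submission
  imports Defs
begin

text \<open>For the lower bound, a vertex labelled 2 must have a neighbour with positive label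
  (otherwise it would be isolated in the subgraph induced by the positive labels), so it
  dominates at most \<open>\<Delta> - 1\<close> vertices labelled 0. Hence \<open>|V\<^sub>0| \<le> (\<Delta> - 1) |V\<^sub>2|\<close>, and
  \<open>2n = 2|V\<^sub>0| + 2|V\<^sub>1| + 2|V\<^sub>2| \<le> \<Delta> (|V\<^sub>1| + 2|V\<^sub>2|)\<close> as soon as \<open>\<Delta> \<ge> 2\<close>.
  For the upper bound, label a vertex \<open>v\<close> of maximum degree with 2, one of its neighbours
  with 1, its other neighbours with 0 and all remaining vertices with 1.\<close>

lemma graph_finite: "graph V E \<Longrightarrow> finite V"
  by (simp add: graph_def)

lemma graph_sym: "graph V E \<Longrightarrow> E u v \<Longrightarrow> E v u"
  by (simp add: graph_def)

lemma graph_irrefl: "graph V E \<Longrightarrow> \<not> E v v"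
  by (simp add: graph_def)

lemma graph_edge_in_V: "graph V E \<Longrightarrow> E u v \<Longrightarrow> u \<in> V \<and> v \<in> V"
  by (simp add: graph_def)

lemma degree_le_max_degree:
  assumes "finite V" "v \<in> V"
  shows "degree V E v \<le> max_degree V E"
  unfolding max_degree_def using assms by (intro Max_ge) auto

lemma max_degree_attained:
  assumes "finite V" "max_degree V E > 0"
  obtains v where "v \<in> V" "degree V E v = max_degree V E"
proof -
  have "max_degree V E \<in> insert 0 (degree V E ` V)"
    unfolding max_degree_def using assms(1) by (intro Max_in) auto
  with assms(2) that show thesis by auto
qed

lemma weight_eq_card_levels:
  assumes "finite V" "\<forall>v\<in>V. f v \<in> {0,1,2}"
  shows "weight V f = card {v\<in>V. f v = 1} + 2 * card {v\<in>V. f v = 2}"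
proof -
  have "weight V f = (\<Sum>v\<in>V. (if f v = 1 then 1 else 0) + (if f v = 2 then 2 else 0))"
    unfolding weight_def using assms(2) by (intro sum.cong) auto
  also have "\<dots> = card {v\<in>V. f v = 1} + 2 * card {v\<in>V. f v = 2}"
    using assms(1) by (simp add: sum.distrib sum.If_cases Int_def mult.commute)
  finally show ?thesis .
qed

lemma card_eq_card_levels:
  fixes f :: "'a \<Rightarrow> nat"
  assumes "finite V" "\<forall>v\<in>V. f v \<in> {0,1,2}"
  shows "card V = card {v\<in>V. f v = 0} + card {v\<in>V. f v = 1} + card {v\<in>V. f v = 2}"
proof -
  have "card V = (\<Sum>v\<in>V. (if f v = 0 then 1 else 0) + (if f v = 1 then 1 else 0)
      + (if f v = 2 then 1 else 0))"
    using assms(2) by (subst card_eq_sum, intro sum.cong) auto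
  also have "\<dots> = card {v\<in>V. f v = 0} + card {v\<in>V. f v = 1} + card {v\<in>V. f v = 2}"
    using assms(1) by (simp add: sum.distrib sum.If_cases Int_def)
  finally show ?thesis .
qed

lemma weight_le_twice_card:
  assumes "finite V" "is_qtrdf V E f"
  shows "weight V f \<le> 2 * card V"
proof -
  have "weight V f \<le> (\<Sum>v\<in>V. 2)"
    unfolding weight_def using assms(2) unfolding is_qtrdf_def by (intro sum_mono) auto
  then show ?thesis by simp
qed

lemma card_zero_neighbours_of_two_le:
  assumes g: "graph V E" and f: "is_qtrdf V E f" and x: "x \<in> V" "f x = 2"
  shows "card {u\<in>V. f u = 0 \<and> E x u} \<le> max_degree V E - 1"
proof -
  obtain y where y: "y \<in> V" "E x y" "f y \<noteq> 0"
    using f x unfolding is_qtrdf_def by force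
  have fin: "finite V" using g by (rule graph_finite)
  have "card {u\<in>V. f u = 0 \<and> E x u} \<le> card ({u\<in>V. E x u} - {y})"
    using fin y by (intro card_mono) auto
  also have "\<dots> = degree V E x - 1"
    unfolding degree_def using y fin by (subst card_Diff_singleton) auto
  also have "\<dots> \<le> max_degree V E - 1"
    using degree_le_max_degree[OF fin x(1), of E] by (rule diff_le_mono)
  finally show ?thesis .
qed

lemma card_zero_level_le:
  assumes g: "graph V E" and f: "is_qtrdf V E f"
  shows "card {v\<in>V. f v = 0} \<le> card {v\<in>V. f v = 2} * (max_degree V E - 1)"
proof -
  let ?V2 = "{v\<in>V. f v = 2}"
  have fin: "finite V" using g by (rule graph_finite)
  have "{v\<in>V. f v = 0} \<subseteq> (\<Union>x\<in>?V2. {u\<in>V. f u = 0 \<and> E x u})"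
  proof
    fix v assume "v \<in> {v\<in>V. f v = 0}"
    then obtain u where "u \<in> V" "E v u" "f u = 2" "v \<in> V" "f v = 0"
      using f unfolding is_qtrdf_def by auto
    then show "v \<in> (\<Union>x\<in>?V2. {u\<in>V. f u = 0 \<and> E x u})"
      using graph_sym[OF g] by blast
  qed
  then have "card {v\<in>V. f v = 0} \<le> card (\<Union>x\<in>?V2. {u\<in>V. f u = 0 \<and> E x u})"
    using fin by (intro card_mono) auto
  also have "\<dots> \<le> (\<Sum>x\<in>?V2. card {u\<in>V. f u = 0 \<and> E x u})"
    using fin by (intro card_UN_le) auto
  also have "\<dots> \<le> (\<Sum>x\<in>?V2. max_degree V E - 1)"
    using card_zero_neighbours_of_two_le[OF g f] by (intro sum_mono) auto
  finally show ?thesis by simp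
qed

lemma card_le_max_degree_mult_weight:
  assumes g: "graph V E" and d: "max_degree V E \<ge> 2" and f: "is_qtrdf V E f"
  shows "2 * card V \<le> max_degree V E * weight V f"
proof -
  let ?D = "max_degree V E"
  let ?n0 = "card {v\<in>V. f v = 0}" and ?n1 = "card {v\<in>V. f v = 1}"
    and ?n2 = "card {v\<in>V. f v = 2}"
  have fin: "finite V" using g by (rule graph_finite)
  have vals: "\<forall>v\<in>V. f v \<in> {0,1,2}" using f unfolding is_qtrdf_def by auto
  have "2 * card V = 2 * ?n0 + 2 * ?n1 + 2 * ?n2"
    using card_eq_card_levels[OF fin vals] by simp
  also have "\<dots> \<le> 2 * (?n2 * (?D - 1)) + ?D * ?n1 + 2 * ?n2"
  proof (intro add_mono)
    show "2 * ?n0 \<le> 2 * (?n2 * (?D - 1))"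
      using card_zero_level_le[OF g f] by simp
    show "2 * ?n1 \<le> ?D * ?n1"
      using d by (rule mult_right_mono) simp
  qed simp
  also have "\<dots> = ?D * (?n1 + 2 * ?n2)"
    using d by (cases ?D) (auto simp: algebra_simps)
  finally show ?thesis
    unfolding weight_eq_card_levels[OF fin vals] .
qed

lemma is_qtrdf_const_one: "is_qtrdf V E (\<lambda>_. 1)"
  by (simp add: is_qtrdf_def)

lemma finite_qtrdf_weights:
  "graph V E \<Longrightarrow> finite {weight V f | f. is_qtrdf V E f}"
  by (rule finite_subset[of _ "{..2 * card V}"])
    (auto dest: weight_le_twice_card[OF graph_finite])

lemma gamma_qtR_le_weight:
  "graph V E \<Longrightarrow> is_qtrdf V E f \<Longrightarrow> gamma_qtR V E \<le> weight V f"
  unfolding gamma_qtR_def by (rule Min_le) (auto intro: finite_qtrdf_weights)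

lemma gamma_qtR_attained:
  assumes "graph V E"
  obtains f where "is_qtrdf V E f" "gamma_qtR V E = weight V f"
proof -
  have "gamma_qtR V E \<in> {weight V f | f. is_qtrdf V E f}"
    unfolding gamma_qtR_def using finite_qtrdf_weights[OF assms] is_qtrdf_const_one
    by (intro Min_in) auto
  with that show thesis by auto
qed

lemma card_le_max_degree_mult_gamma_qtR:
  assumes "graph V E" "max_degree V E \<ge> 2"
  shows "2 * card V \<le> max_degree V E * gamma_qtR V E"
  using gamma_qtR_attained[OF assms(1)] card_le_max_degree_mult_weight[OF assms] by metis

lemma ceiling_le_gamma_qtR:
  assumes "graph V E" "max_degree V E \<ge> 2"
  shows "\<lceil>2 * real (card V) / real (max_degree V E)\<rceil> \<le> int (gamma_qtR V E)"
proof -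
  have "2 * real (card V) \<le> real (max_degree V E) * real (gamma_qtR V E)"
    using card_le_max_degree_mult_gamma_qtR[OF assms] by (simp flip: of_nat_mult)
  then have "2 * real (card V) / real (max_degree V E) \<le> real (gamma_qtR V E)"
    using assms(2) by (simp add: pos_divide_le_eq mult.commute)
  then show ?thesis by (simp add: ceiling_le_iff)
qed

definition star_labelling :: "('a \<Rightarrow> 'a \<Rightarrow> bool) \<Rightarrow> 'a \<Rightarrow> 'a \<Rightarrow> 'a \<Rightarrow> nat" where
  "star_labelling E v u w = (if w = v then 2 else if w = u \<or> \<not> E v w then 1 else 0)"

lemma is_qtrdf_star_labelling:
  assumes g: "graph V E" and v: "v \<in> V" and u: "E v u"
  shows "is_qtrdf V E (star_labelling E v u)"
  unfolding is_qtrdf_def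
proof (intro conjI ballI impI)
  fix w assume "w \<in> V" "star_labelling E v u w = 0"
  then have "E w v"
    using graph_sym[OF g] by (auto simp: star_labelling_def split: if_splits)
  then show "\<exists>x\<in>V. E w x \<and> star_labelling E v u x = 2"
    using v by (auto simp: star_labelling_def)
next
  fix w assume "w \<in> V"
    and w: "star_labelling E v u w \<noteq> 0 \<and> (\<forall>x\<in>V. E w x \<longrightarrow> star_labelling E v u x = 0)"
  have "u \<in> V" "u \<noteq> v"
    using u graph_edge_in_V[OF g] graph_irrefl[OF g] by auto
  then have "star_labelling E v u u \<noteq> 0"
    by (simp add: star_labelling_def)
  then have "w \<noteq> v"
    using w u \<open>u \<in> V\<close> by metis
  moreover have "star_labelling E v u w \<noteq> 0"
    using w by blast
  ultimately show "star_labelling E v u w = 1"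
    unfolding star_labelling_def by (auto split: if_splits)
qed (simp add: star_labelling_def)

lemma weight_star_labelling:
  assumes g: "graph V E" and v: "v \<in> V" and u: "E v u"
  shows "int (weight V (star_labelling E v u)) = int (card V) - int (degree V E v) + 2"
proof -
  let ?N = "{w\<in>V. E v w}"
  have fin: "finite V" using g by (rule graph_finite)
  have uN: "u \<in> ?N" and vN: "v \<notin> ?N"
    using u graph_edge_in_V[OF g] graph_irrefl[OF g] by auto
  have "int (weight V (star_labelling E v u))
      = (\<Sum>w\<in>V. 1 + (if w = v then 1 else 0) - (if w \<in> ?N - {u} then 1 else 0))"
    unfolding weight_def of_nat_sum
    using vN by (intro sum.cong) (auto simp: star_labelling_def)
  also have "\<dots> = int (card V) + 1 - int (card (?N - {u}))"
  proof -
    have "V \<inter> {w. E v w \<and> w \<noteq> u} = ?N - {u}" by auto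
    then show ?thesis using fin v by (simp add: sum.distrib sum_subtractf sum.If_cases)
  qed
  also have "\<dots> = int (card V) - int (degree V E v) + 2"
  proof -
    have "card ?N > 0" using uN fin by (auto simp: card_gt_0_iff)
    then show ?thesis using uN fin by (simp add: degree_def card_Diff_singleton of_nat_diff)
  qed
  finally show ?thesis .
qed

lemma gamma_qtR_le_card_minus_max_degree:
  assumes g: "graph V E" and d: "max_degree V E > 0"
  shows "int (gamma_qtR V E) \<le> int (card V) - int (max_degree V E) + 2"
proof -
  have fin: "finite V" using g by (rule graph_finite)
  obtain v where v: "v \<in> V" "degree V E v = max_degree V E"
    using max_degree_attained[OF fin d] .
  then have "{w\<in>V. E v w} \<noteq> {}"
    using d by (metis card.empty degree_def less_irrefl)
  then obtain u where u: "E v u" by auto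
  show ?thesis
    using gamma_qtR_le_weight[OF g is_qtrdf_star_labelling[OF g v(1) u]]
      weight_star_labelling[OF g v(1) u] v(2) by linarith
qed

theorem mainTheorem6:
  fixes V :: "'a set" and E :: "'a \<Rightarrow> 'a \<Rightarrow> bool"
  assumes "graph V E"
    and "max_degree V E \<ge> 2"
  shows "\<lceil>2 * real (card V) / real (max_degree V E)\<rceil> \<le> int (gamma_qtR V E)
    \<and> int (gamma_qtR V E) \<le> int (card V) - int (max_degree V E) + 2"
  using ceiling_le_gamma_qtR[OF assms] gamma_qtR_le_card_minus_max_degree[OF assms(1)] assms(2)
  by simp

end
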